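(* In any two-player perfect-information game, let $U_s$ be the exact EPFs and $U'_s=\bigwedge_{s'\in\mathcal C(s)}(U_{s'}\triangleright\beta(s'))$ for non-leaf $s$ (with $U'_\ell=U_\ell$ for leaves). Let $\{\tilde U_s\}$ be learned EPFs and $\tilde U'_s$ their one-step lookahead targets, all as in the context. Then for every $s\in\mathcal S$, $$\mathrm{Dom}[U_s]=\mathrm{Dom}[U'_s]=\mathrm{Dom}[\tilde U_s]=\mathrm{Dom}[\tilde U'_s]=[\underline V(s),\overline V(s)],$$ where $\mathrm{Dom}[h]=\{\mu: h(\mu)>-\infty\}$.
   Context: A two-player perfect-information game is a finite rooted tree with states $\mathcal S$. Its leaves $\mathcal L$ carry payoffs $r_1(\ell),r_2(\ell)$ for the leader $\mathsf P_1$ and the follower $\mathsf P_2$. Non-leaf states are partitioned into leader states $\mathcal S_1$ and follower states $\mathcal S_2$, and $\mathcal C(s)$ denotes the children of $s$. Bounds, defined by backward induction: - $\underline V(\ell)=\overline V(\ell)=r_2(\ell)$ for leaves; - $\underline V(s)=\min_{s'}\underline V(s')$ for $s\in\mathcal S_1$; - $\underline V(s)=\max_{s'}\underline V(s')$ for $s\in\mathcal S_2$; - $\overline V(s)=\max_{s'}\overline V(s')$ for every non-leaf $s$. For $s\in\mathcal S_2$ and $s'\in\mathcal C(s)$, let $\tau(s')=\max_{s^!\in\mathcal C(s),s^!\ne s'}\underline V(s^!)$. Let $\beta(s')=\tau(s')$ if the parent of $s'$ is in $\mathcal S_2$, and $-\infty$ if it is in $\mathcal S_1$. Operators, for $g:\mathbb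 R\to\mathbb R\cup\{-\infty\}$: - $\bigwedge_i g_i$ is the pointwise infimum of all concave $h\ge\max_i g_i$; - $[g\triangleright t](\mu)=g(\mu)$ for $\mu\ge t$ and $-\infty$ otherwise. Exact EPFs: $U_\ell(\mu)=r_1(\ell)$ if $\mu=r_2(\ell)$ and $-\infty$ otherwise; $U_s=\bigwedge_{s'\in\mathcal C(s)}(U_{s'}\triangleright\beta(s'))$. Learned EPFs: $\tilde U_\ell=U_\ell$ for leaves. For non-leaf $s$, $\tilde U_s$ is the piecewise linear interpolation of finitely many points with $x$-coordinates in $[\underline V(s),\overline V(s)]$ including both endpoints. It is real-valued on that interval and $-\infty$ outside. Targets: $\tilde U'_s=\bigwedge_{s'\in\mathcal C(s)}(\tilde U_{s'}\triangleright\beta(s'))$ for non-leaf $s$, and $\tilde U'_\ell=\tilde U_\ell$. *)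

theory Defs
  imports "HOL-Analysis.Analysis" "HOL-Library.Extended_Real"
begin

datatype player = Leader | Follower

text \<open>A game tree: a leaf carries payoffs (r1, r2) for leader and follower;
  a non-leaf state belongs to a player and has an ordered list of children.
  States of the game are positions (paths of child indices) in the tree,
  so distinct children are distinct states even if their subtrees coincide.\<close>
datatype gtree = Leaf real real | Node player "gtree list"

fun wf_tree :: "gtree \<Rightarrow> bool" where
  "wf_tree (Leaf _ _) = True"
| "wf_tree (Node p cs) = (cs \<noteq> [] \<and> (\<forall>c\<in>set cs. wf_tree c))"

fun is_leaf :: "gtree \<Rightarrow> bool" where
  "is_leaf (Leaf _ _) = True"
| "is_leaf (Node _ _) = False"

fun subtree :: "gtree \<Rightarrow> nat list \<Rightarrow> gtree option" where
  "subtree t [] = Some t"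
| "subtree (Leaf _ _) (i # q) = None"
| "subtree (Node p cs) (i # q) = (if i < length cs then subtree (cs ! i) q else None)"

definition positions :: "gtree \<Rightarrow> nat list set" where
  "positions t = {q. subtree t q \<noteq> None}"

fun Vlo :: "gtree \<Rightarrow> real" where
  "Vlo (Leaf r1 r2) = r2"
| "Vlo (Node Leader cs) = Min (set (map Vlo cs))"
| "Vlo (Node Follower cs) = Max (set (map Vlo cs))"

fun Vhi :: "gtree \<Rightarrow> real" where
  "Vhi (Leaf r1 r2) = r2"
| "Vhi (Node p cs) = Max (set (map Vhi cs))"

text \<open>tau for child i of a node with children cs: max of lower bounds of the
  other children (-infinity if there are none).\<close>
definition tau :: "gtree list \<Rightarrow> nat \<Rightarrow> ereal" where
  "tau cs i = Sup {ereal (Vlo (cs ! j)) | j. j < length cs \<and> j \<noteq> i}"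

definition beta :: "player \<Rightarrow> gtree list \<Rightarrow> nat \<Rightarrow> ereal" where
  "beta p cs i = (if p = Follower then tau cs i else -\<infinity>)"

definition concave_e :: "(real \<Rightarrow> ereal) \<Rightarrow> bool" where
  "concave_e h \<longleftrightarrow> (\<forall>x. h x \<noteq> \<infinity>) \<and> convex {(x, t::real). ereal t \<le> h x}"

definition hull_op :: "(real \<Rightarrow> ereal) list \<Rightarrow> real \<Rightarrow> ereal" where
  "hull_op gs \<mu> = Inf {h \<mu> | h. concave_e h \<and> (\<forall>g\<in>set gs. \<forall>x. g x \<le> h x)}"

definition trunc :: "(real \<Rightarrow> ereal) \<Rightarrow> ereal \<Rightarrow> real \<Rightarrow> ereal" where
  "trunc g t \<mu> = (if t \<le> ereal \<mu> then g \<mu> else -\<infinity>)"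

definition step :: "player \<Rightarrow> gtree list \<Rightarrow> (real \<Rightarrow> ereal) list \<Rightarrow> real \<Rightarrow> ereal" where
  "step p cs Fs = hull_op (map (\<lambda>i. trunc (Fs ! i) (beta p cs i)) [0..<length cs])"

definition leafEPF :: "real \<Rightarrow> real \<Rightarrow> real \<Rightarrow> ereal" where
  "leafEPF r1 r2 \<mu> = (if \<mu> = r2 then ereal r1 else -\<infinity>)"

fun U :: "gtree \<Rightarrow> real \<Rightarrow> ereal" where
  "U (Leaf r1 r2) = leafEPF r1 r2"
| "U (Node p cs) = step p cs (map U cs)"

fun U' :: "gtree \<Rightarrow> real \<Rightarrow> ereal" where
  "U' (Leaf r1 r2) = U (Leaf r1 r2)"
| "U' (Node p cs) = step p cs (map U cs)"

definition pwl_interp :: "real \<Rightarrow> real \<Rightarrow> (real \<Rightarrow> ereal) \<Rightarrow> bool" where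
  "pwl_interp lo hi f \<longleftrightarrow>
     (\<exists>pts :: (real \<times> real) list.
        pts \<noteq> [] \<and> sorted_wrt (<) (map fst pts) \<and>
        fst (hd pts) = lo \<and> fst (last pts) = hi \<and>
        (\<forall>k<length pts. f (fst (pts ! k)) = ereal (snd (pts ! k))) \<and>
        (\<forall>k. Suc k < length pts \<longrightarrow>
            (\<forall>\<mu>. fst (pts ! k) \<le> \<mu> \<and> \<mu> \<le> fst (pts ! Suc k) \<longrightarrow>
               f \<mu> = ereal (snd (pts ! k) + (\<mu> - fst (pts ! k)) / (fst (pts ! Suc k) - fst (pts ! k))
                                           * (snd (pts ! Suc k) - snd (pts ! k))))) \<and>
        (\<forall>\<mu>. (\<mu> < lo \<or> hi < \<mu>) \<longrightarrow> f \<mu> = -\<infinity>))"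

definition learned_EPFs :: "gtree \<Rightarrow> (nat list \<Rightarrow> real \<Rightarrow> ereal) \<Rightarrow> bool" where
  "learned_EPFs t Ut \<longleftrightarrow>
     (\<forall>q s. subtree t q = Some s \<longrightarrow>
        (case s of Leaf r1 r2 \<Rightarrow> Ut q = U (Leaf r1 r2)
                 | Node p cs \<Rightarrow> pwl_interp (Vlo s) (Vhi s) (Ut q)))"

definition learned_target :: "gtree \<Rightarrow> (nat list \<Rightarrow> real \<Rightarrow> ereal) \<Rightarrow> nat list \<Rightarrow> real \<Rightarrow> ereal" where
  "learned_target t Ut q =
     (case subtree t q of
        Some (Node p cs) \<Rightarrow> step p cs (map (\<lambda>i. Ut (q @ [i])) [0..<length cs])
      | _ \<Rightarrow> Ut q)"

definition Dom :: "(real \<Rightarrow> ereal) \<Rightarrow> real set" where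
  "Dom h = {\<mu>. h \<mu> > -\<infinity>}"

end

theory Submission
  imports Defs
begin

text \<open>Each of the four functions has domain \<open>[Vlo s, Vhi s]\<close> and is bounded above.
  For a leaf this is immediate and for a learned EPF it holds by construction; the exact
  EPFs and the targets arise from such functions by one hull step, so it suffices that one
  step preserves the property. At an inner node every truncated child has its domain inside
  \<open>[Vlo s, Vhi s]\<close> (at a follower node, truncation at \<open>\<tau>\<close> cuts off everything below the
  largest lower bound of the siblings), some child reaches \<open>Vlo s\<close> and some child reaches
  \<open>Vhi s\<close>. The hull of functions bounded by \<open>M\<close> lies below the concave function equal
  to \<open>M\<close> on \<open>[Vlo s, Vhi s]\<close>, and above the chord joining the two end values.\<close>

definition bounded_above :: "(real \<Rightarrow> ereal) \<Rightarrow> bool" where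
  "bounded_above F \<longleftrightarrow> (\<exists>M. \<forall>x. F x \<le> ereal M)"

text \<open>Boundedness above has to be carried along: for functions without a common real
  upper bound there is no concave majorant, and their hull is \<open>\<infinity>\<close> everywhere.\<close>

definition regular_EPF :: "gtree \<Rightarrow> (real \<Rightarrow> ereal) \<Rightarrow> bool" where
  "regular_EPF s F \<longleftrightarrow> Dom F = {Vlo s..Vhi s} \<and> bounded_above F"

lemma bounded_above_list:
  "\<forall>F\<in>set Fs. bounded_above F \<Longrightarrow> \<exists>M. \<forall>F\<in>set Fs. \<forall>x. F x \<le> ereal M"
proof (induction Fs)
  case Nil
  show ?case by simp
next
  case (Cons F Fs)
  then obtain M1 M2 where "\<forall>x. F x \<le> ereal M1" "\<forall>G\<in>set Fs. \<forall>x. G x \<le> ereal M2"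
    by (auto simp: bounded_above_def)
  then have "\<forall>G\<in>set (F # Fs). \<forall>x. G x \<le> ereal (max M1 M2)"
    by (fastforce simp: le_max_iff_disj)
  then show ?case by blast
qed

lemma ereal_real_of_ereal_Dom:
  assumes "x \<in> Dom g" and "g x \<le> ereal M"
  shows "g x = ereal (real_of_ereal (g x))"
  using assms by (cases "g x") (auto simp: Dom_def)

lemma Dom_trunc: "Dom (trunc g t) = {x \<in> Dom g. t \<le> ereal x}"
  unfolding Dom_def trunc_def by auto

lemma concave_e_ge_min_ends:
  assumes h: "concave_e h" and ha: "ereal ya \<le> h a" and hb: "ereal yb \<le> h b"
    and x: "a \<le> x" "x \<le> b"
  shows "ereal (min ya yb) \<le> h x"
proof (cases "a = b")
  case True
  with x ha show ?thesis by (metis order.trans antisym ereal_less_eq(3) min.cobounded1)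
next
  case False
  with x have "a < b" by simp
  define v where "v = (x - a) / (b - a)"
  have v: "0 \<le> v" "v \<le> 1"
    using \<open>a < b\<close> x by (auto simp: v_def)
  have "(1 - v) * a + v * b = a + v * (b - a)"
    by (simp add: algebra_simps)
  also have "\<dots> = x"
    using \<open>a < b\<close> by (simp add: v_def)
  finally have x_eq: "(1 - v) * a + v * b = x" .
  have "(1 - v) *\<^sub>R (a, ya) + v *\<^sub>R (b, yb) \<in> {(x, t). ereal t \<le> h x}"
    using h ha hb v unfolding concave_e_def by (intro convexD) auto
  then have "ereal ((1 - v) * ya + v * yb) \<le> h x"
    using x_eq by simp
  moreover have "min ya yb \<le> (1 - v) * ya + v * yb"
    using convex_bound_le[of "-ya" "- min ya yb" "-yb" "1 - v" v] v by simp
  ultimately show ?thesis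
    by (meson order.trans ereal_less_eq(3))
qed

lemma hull_op_le_concave_majorant:
  assumes "concave_e h" and "\<forall>g\<in>set gs. \<forall>x. g x \<le> h x"
  shows "hull_op gs x \<le> h x"
  unfolding hull_op_def using assms by (intro Inf_lower) blast

lemma Dom_hull_op:
  assumes bounded: "\<forall>g\<in>set gs. \<forall>x. g x \<le> ereal M"
    and Dom_sub: "\<forall>g\<in>set gs. Dom g \<subseteq> {a..b}"
    and ga: "ga \<in> set gs" "a \<in> Dom ga" and gb: "gb \<in> set gs" "b \<in> Dom gb"
  shows "Dom (hull_op gs) = {a..b}" and "hull_op gs x \<le> ereal M"
proof -
  define box where "box x = (if x \<in> {a..b} then ereal M else -\<infinity>)" for x
  have hypograph: "{(x, t). ereal t \<le> box x} = {a..b} \<times> {..M}"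
    by (auto simp: box_def split: if_splits)
  have "concave_e box"
    unfolding concave_e_def hypograph by (auto simp: box_def convex_Times)
  moreover have "\<forall>g\<in>set gs. \<forall>x. g x \<le> box x"
    using bounded Dom_sub by (fastforce simp: box_def Dom_def not_less)
  ultimately have upper: "hull_op gs x \<le> box x" for x
    by (rule hull_op_le_concave_majorant)
  define ya yb where "ya = real_of_ereal (ga a)" and "yb = real_of_ereal (gb b)"
  have ya: "ga a = ereal ya" and yb: "gb b = ereal yb"
    using ga gb bounded ereal_real_of_ereal_Dom unfolding ya_def yb_def by blast+
  have lower: "ereal (min ya yb) \<le> hull_op gs x" if "x \<in> {a..b}" for x
    unfolding hull_op_def
  proof (rule Inf_greatest, clarify)
    fix h
    assume "concave_e h" and majorant: "\<forall>g\<in>set gs. \<forall>x. g x \<le> h x"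
    have "ga a \<le> h a" "gb b \<le> h b"
      using majorant ga(1) gb(1) by blast+
    then have "ereal ya \<le> h a" "ereal yb \<le> h b"
      using ya yb by simp_all
    with \<open>concave_e h\<close> show "ereal (min ya yb) \<le> h x"
      by (rule concave_e_ge_min_ends) (use that in auto)
  qed
  show "Dom (hull_op gs) = {a..b}"
  proof
    show "Dom (hull_op gs) \<subseteq> {a..b}"
    proof
      fix x
      assume "x \<in> Dom (hull_op gs)"
      with upper[of x] show "x \<in> {a..b}"
        by (auto simp: Dom_def box_def split: if_splits)
    qed
    show "{a..b} \<subseteq> Dom (hull_op gs)"
    proof
      fix x
      assume "x \<in> {a..b}"
      then have "ereal (min ya yb) \<le> hull_op gs x" by (rule lower)
      then show "x \<in> Dom (hull_op gs)"
        by (cases "hull_op gs x") (auto simp: Dom_def min_def split: if_splits)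
    qed
  qed
  show "hull_op gs x \<le> ereal M"
    using upper[of x] by (auto simp: box_def split: if_splits)
qed

lemma list_between_hd_last:
  "xs \<noteq> [] \<Longrightarrow> hd xs \<le> x \<Longrightarrow> x \<le> last xs \<Longrightarrow>
     x \<in> set xs \<or> (\<exists>k. Suc k < length xs \<and> xs ! k < x \<and> x < xs ! Suc k)"
  for x :: "'a :: linorder"
proof (induction xs)
  case Nil
  then show ?case by simp
next
  case (Cons y ys)
  show ?case
  proof (cases "ys = [] \<or> x = y")
    case True
    with Cons.prems show ?thesis by auto
  next
    case False
    show ?thesis
    proof (cases "x < hd ys")
      case True
      with False Cons.prems have "y < x" "x < (y # ys) ! Suc 0"
        by (auto simp: hd_conv_nth)
      with False show ?thesis by force
    next
      case False
      with \<open>\<not> (ys = [] \<or> x = y)\<close> Cons have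
        "x \<in> set ys \<or> (\<exists>k. Suc k < length ys \<and> ys ! k < x \<and> x < ys ! Suc k)"
        by auto
      then show ?thesis by force
    qed
  qed
qed

lemma pwl_interp_regular:
  assumes "pwl_interp lo hi f"
  shows "Dom f = {lo..hi}" and "bounded_above f"
proof -
  obtain pts :: "(real \<times> real) list" where ne: "pts \<noteq> []"
    and hd: "fst (hd pts) = lo" and last: "fst (last pts) = hi"
    and at_pts: "\<forall>k<length pts. f (fst (pts ! k)) = ereal (snd (pts ! k))"
    and on_seg: "\<forall>k. Suc k < length pts \<longrightarrow>
            (\<forall>\<mu>. fst (pts ! k) \<le> \<mu> \<and> \<mu> \<le> fst (pts ! Suc k) \<longrightarrow>
               f \<mu> = ereal (snd (pts ! k) + (\<mu> - fst (pts ! k)) / (fst (pts ! Suc k) - fst (pts ! k))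
                                           * (snd (pts ! Suc k) - snd (pts ! k))))"
    and outside: "\<forall>\<mu>. (\<mu> < lo \<or> hi < \<mu>) \<longrightarrow> f \<mu> = -\<infinity>"
    using assms unfolding pwl_interp_def by blast
  define M where "M = Max (snd ` set pts)"
  have snd_le_M: "k < length pts \<Longrightarrow> snd (pts ! k) \<le> M" for k
    unfolding M_def by (intro Max_ge) auto
  have inside: "\<exists>y. f x = ereal y \<and> y \<le> M" if "lo \<le> x" "x \<le> hi" for x
  proof -
    have "hd (map fst pts) \<le> x" "x \<le> last (map fst pts)"
      using that ne hd last by (simp_all add: hd_map last_map)
    then consider k where "k < length pts" "x = fst (pts ! k)"
      | k where "Suc k < length pts" "fst (pts ! k) < x" "x < fst (pts ! Suc k)"
      using list_between_hd_last[of "map fst pts" x] ne by (auto simp: in_set_conv_nth)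
    then show ?thesis
    proof cases
      case 1
      then show ?thesis using at_pts snd_le_M by auto
    next
      case (2 k)
      define l where "l = (x - fst (pts ! k)) / (fst (pts ! Suc k) - fst (pts ! k))"
      have l: "0 \<le> l" "l \<le> 1"
        using 2 unfolding l_def by (simp_all add: divide_le_eq_1)
      have "snd (pts ! k) + l * (snd (pts ! Suc k) - snd (pts ! k))
          = (1 - l) * snd (pts ! k) + l * snd (pts ! Suc k)"
        by (simp add: algebra_simps)
      moreover have "f x = ereal (snd (pts ! k) + l * (snd (pts ! Suc k) - snd (pts ! k)))"
        using on_seg 2 unfolding l_def by simp
      ultimately have "f x = ereal ((1 - l) * snd (pts ! k) + l * snd (pts ! Suc k))"
        by simp
      moreover have "(1 - l) * snd (pts ! k) + l * snd (pts ! Suc k) \<le> M"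
        using 2 l snd_le_M by (intro convex_bound_le) auto
      ultimately show ?thesis by blast
    qed
  qed
  show "Dom f = {lo..hi}"
    using inside outside by (force simp: Dom_def not_less)
  have "f x \<le> ereal M" for x
    using inside[of x] outside by (cases "lo \<le> x \<and> x \<le> hi") auto
  then show "bounded_above f"
    unfolding bounded_above_def by blast
qed

lemma Vlo_le_Vhi: "wf_tree s \<Longrightarrow> Vlo s \<le> Vhi s"
proof (induction s rule: Vlo.induct)
  case (1 r1 r2)
  then show ?case by simp
next
  case (2 cs)
  then obtain c where c: "c \<in> set cs" by (cases cs) auto
  have "Min (set (map Vlo cs)) \<le> Vlo c" using c by (intro Min_le) auto
  also have "Vlo c \<le> Vhi c" using 2 c by simp
  also have "Vhi c \<le> Max (set (map Vhi cs))" using c by (intro Max_ge) auto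
  finally show ?case by simp
next
  case (3 cs)
  have "Max (set (map Vlo cs)) \<in> set (map Vlo cs)" using 3 by (intro Max_in) auto
  then obtain c where c: "c \<in> set cs" "Max (set (map Vlo cs)) = Vlo c" by auto
  have "Vlo c \<le> Vhi c" using 3 c by simp
  also have "Vhi c \<le> Max (set (map Vhi cs))" using c by (intro Max_ge) auto
  finally show ?case using c by simp
qed

lemma Vlo_Node_le_max_beta:
  assumes "i < length cs"
  shows "ereal (Vlo (Node p cs)) \<le> max (ereal (Vlo (cs ! i))) (beta p cs i)"
proof (cases p)
  case Leader
  have "Vlo (Node p cs) \<le> Vlo (cs ! i)"
    using assms Leader by (auto intro: Min_le)
  then show ?thesis by (simp add: le_max_iff_disj)
next
  case Follower
  have "Max (set (map Vlo cs)) \<in> set (map Vlo cs)"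
    using assms by (intro Max_in) auto
  then obtain j where j: "j < length cs" "Vlo (Node p cs) = Vlo (cs ! j)"
    using Follower by (auto simp: in_set_conv_nth)
  show ?thesis
  proof (cases "j = i")
    case False
    with j have "ereal (Vlo (cs ! j)) \<le> tau cs i"
      unfolding tau_def by (intro Sup_upper) auto
    with j Follower show ?thesis by (simp add: beta_def le_max_iff_disj)
  qed (use j in simp)
qed

lemma Vlo_Node_attained:
  assumes "cs \<noteq> []"
  obtains k where "k < length cs" "Vlo (cs ! k) = Vlo (Node p cs)"
    "beta p cs k \<le> ereal (Vlo (Node p cs))"
proof (cases p)
  case Leader
  have "Min (set (map Vlo cs)) \<in> set (map Vlo cs)"
    using assms by (intro Min_in) auto
  with Leader that show ?thesis by (auto simp: in_set_conv_nth beta_def)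
next
  case Follower
  have "Max (set (map Vlo cs)) \<in> set (map Vlo cs)"
    using assms by (intro Max_in) auto
  then obtain k where k: "k < length cs" "Vlo (cs ! k) = Vlo (Node p cs)"
    using Follower by (auto simp: in_set_conv_nth)
  have "tau cs k \<le> ereal (Vlo (Node p cs))"
    unfolding tau_def using Follower by (auto intro!: Sup_least Max_ge)
  with k Follower that show ?thesis by (simp add: beta_def)
qed

lemma beta_le_Vhi_Node:
  assumes "\<forall>c\<in>set cs. Vlo c \<le> Vhi c"
  shows "beta p cs i \<le> ereal (Vhi (Node p cs))"
proof -
  have "Vlo c \<le> Vhi (Node p cs)" if "c \<in> set cs" for c
    using assms that by (auto intro: order.trans[OF _ Max_ge])
  then have "tau cs i \<le> ereal (Vhi (Node p cs))"
    unfolding tau_def by (auto intro!: Sup_least)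
  then show ?thesis by (simp add: beta_def)
qed

lemma Dom_trunc_child_subset:
  assumes i: "i < length cs" and Dom_F: "Dom F = {Vlo (cs ! i)..Vhi (cs ! i)}"
  shows "Dom (trunc F (beta p cs i)) \<subseteq> {Vlo (Node p cs)..Vhi (Node p cs)}"
proof
  fix x
  assume "x \<in> Dom (trunc F (beta p cs i))"
  then have x: "Vlo (cs ! i) \<le> x" "x \<le> Vhi (cs ! i)" "beta p cs i \<le> ereal x"
    using Dom_F by (auto simp: Dom_trunc)
  then have "max (ereal (Vlo (cs ! i))) (beta p cs i) \<le> ereal x"
    by simp
  then have "Vlo (Node p cs) \<le> x"
    using Vlo_Node_le_max_beta[OF i, of p] by (meson order.trans ereal_less_eq(3))
  moreover have "Vhi (cs ! i) \<le> Vhi (Node p cs)"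
    using i by (auto intro: Max_ge)
  ultimately show "x \<in> {Vlo (Node p cs)..Vhi (Node p cs)}"
    using x by simp
qed

lemma Vlo_Node_in_Dom_trunc:
  assumes ne: "cs \<noteq> []" and bounds: "\<forall>c\<in>set cs. Vlo c \<le> Vhi c"
    and Dom_Fs: "\<forall>i<length cs. Dom (Fs ! i) = {Vlo (cs ! i)..Vhi (cs ! i)}"
  obtains k where "k < length cs" "Vlo (Node p cs) \<in> Dom (trunc (Fs ! k) (beta p cs k))"
proof -
  obtain k where k: "k < length cs" "Vlo (cs ! k) = Vlo (Node p cs)"
    "beta p cs k \<le> ereal (Vlo (Node p cs))"
    by (rule Vlo_Node_attained[OF ne])
  moreover have "Vlo (cs ! k) \<le> Vhi (cs ! k)"
    using bounds k(1) by auto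
  ultimately have "Vlo (Node p cs) \<in> Dom (trunc (Fs ! k) (beta p cs k))"
    using Dom_Fs k(1) by (simp add: Dom_trunc)
  with k(1) show ?thesis by (rule that)
qed

lemma Vhi_Node_in_Dom_trunc:
  assumes ne: "cs \<noteq> []" and bounds: "\<forall>c\<in>set cs. Vlo c \<le> Vhi c"
    and Dom_Fs: "\<forall>i<length cs. Dom (Fs ! i) = {Vlo (cs ! i)..Vhi (cs ! i)}"
  obtains k where "k < length cs" "Vhi (Node p cs) \<in> Dom (trunc (Fs ! k) (beta p cs k))"
proof -
  have "Max (set (map Vhi cs)) \<in> set (map Vhi cs)"
    using ne by (intro Max_in) auto
  then obtain k where k: "k < length cs" "Vhi (cs ! k) = Vhi (Node p cs)"
    by (auto simp: in_set_conv_nth)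
  moreover have "Vlo (cs ! k) \<le> Vhi (cs ! k)"
    using bounds k(1) by auto
  moreover have "beta p cs k \<le> ereal (Vhi (Node p cs))"
    by (rule beta_le_Vhi_Node[OF bounds])
  ultimately have "Vhi (Node p cs) \<in> Dom (trunc (Fs ! k) (beta p cs k))"
    using Dom_Fs k(1) by (simp add: Dom_trunc)
  with k(1) show ?thesis by (rule that)
qed

lemma regular_EPF_step:
  assumes ne: "cs \<noteq> []" and len: "length Fs = length cs"
    and bounds: "\<forall>c\<in>set cs. Vlo c \<le> Vhi c"
    and children: "\<forall>i<length cs. regular_EPF (cs ! i) (Fs ! i)"
  shows "regular_EPF (Node p cs) (step p cs Fs)"
proof -
  define gs where "gs = map (\<lambda>i. trunc (Fs ! i) (beta p cs i)) [0..<length cs]"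
  have Dom_Fs: "\<forall>i<length cs. Dom (Fs ! i) = {Vlo (cs ! i)..Vhi (cs ! i)}"
    using children by (simp add: regular_EPF_def)
  have "\<forall>F\<in>set Fs. bounded_above F"
    using children len by (auto simp: in_set_conv_nth regular_EPF_def)
  then obtain M where "\<forall>F\<in>set Fs. \<forall>x. F x \<le> ereal M"
    using bounded_above_list by blast
  then have bounded: "\<forall>g\<in>set gs. \<forall>x. g x \<le> ereal M"
    using len by (auto simp: gs_def trunc_def)
  have Dom_sub: "\<forall>g\<in>set gs. Dom g \<subseteq> {Vlo (Node p cs)..Vhi (Node p cs)}"
    using Dom_Fs Dom_trunc_child_subset by (simp add: gs_def)
  obtain ka where ka: "ka < length cs" "Vlo (Node p cs) \<in> Dom (trunc (Fs ! ka) (beta p cs ka))"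
    by (rule Vlo_Node_in_Dom_trunc[OF ne bounds Dom_Fs])
  obtain kb where kb: "kb < length cs" "Vhi (Node p cs) \<in> Dom (trunc (Fs ! kb) (beta p cs kb))"
    by (rule Vhi_Node_in_Dom_trunc[OF ne bounds Dom_Fs])
  have "trunc (Fs ! ka) (beta p cs ka) \<in> set gs" "trunc (Fs ! kb) (beta p cs kb) \<in> set gs"
    using ka(1) kb(1) by (auto simp: gs_def)
  note hull = Dom_hull_op[OF bounded Dom_sub this(1) ka(2) this(2) kb(2)]
  have "step p cs Fs = hull_op gs"
    by (simp add: step_def gs_def)
  with hull show ?thesis
    unfolding regular_EPF_def bounded_above_def by auto
qed

lemma subtree_wf: "subtree t q = Some s \<Longrightarrow> wf_tree t \<Longrightarrow> wf_tree s"
  by (induction t q rule: subtree.induct) (auto split: if_splits)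

lemma subtree_append: "subtree t q = Some s \<Longrightarrow> subtree t (q @ r) = subtree s r"
  by (induction t q rule: subtree.induct) (auto split: if_splits)

lemma regular_EPF_leaf: "regular_EPF (Leaf r1 r2) (U (Leaf r1 r2))"
  by (auto simp: regular_EPF_def bounded_above_def Dom_def leafEPF_def intro!: exI[of _ r1])

lemma regular_EPF_U: "wf_tree s \<Longrightarrow> regular_EPF s (U s)"
proof (induction s)
  case (Leaf r1 r2)
  show ?case by (rule regular_EPF_leaf)
next
  case (Node p cs)
  then show ?case
    by (auto intro!: regular_EPF_step Vlo_le_Vhi)
qed

lemma regular_EPF_learned:
  assumes "learned_EPFs t Ut" and "subtree t q = Some s"
  shows "regular_EPF s (Ut q)"
proof (cases s)
  case (Leaf r1 r2)
  then show ?thesis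
    using assms regular_EPF_leaf unfolding learned_EPFs_def by fastforce
next
  case (Node p cs)
  then have "pwl_interp (Vlo s) (Vhi s) (Ut q)"
    using assms unfolding learned_EPFs_def by fastforce
  then show ?thesis
    using pwl_interp_regular unfolding regular_EPF_def by blast
qed

lemma regular_EPF_learned_target:
  assumes "wf_tree t" and "learned_EPFs t Ut" and "subtree t q = Some s"
  shows "regular_EPF s (learned_target t Ut q)"
proof (cases s)
  case (Leaf r1 r2)
  then show ?thesis
    using assms regular_EPF_learned by (simp add: learned_target_def)
next
  case (Node p cs)
  have wf: "wf_tree (Node p cs)"
    using assms Node subtree_wf by blast
  have "regular_EPF (cs ! i) (Ut (q @ [i]))" if "i < length cs" for i
    using assms(2) subtree_append[OF assms(3), of "[i]"] Node that
    by (auto intro: regular_EPF_learned)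
  then have "regular_EPF s (step p cs (map (\<lambda>i. Ut (q @ [i])) [0..<length cs]))"
    using wf Node by (auto intro!: regular_EPF_step Vlo_le_Vhi)
  then show ?thesis
    using assms(3) Node by (simp add: learned_target_def)
qed

theorem lemma1:
  fixes t :: gtree and Ut :: "nat list \<Rightarrow> real \<Rightarrow> ereal" and q :: "nat list" and s :: gtree
  assumes "wf_tree t"
    and "learned_EPFs t Ut"
    and "subtree t q = Some s"
  shows "Dom (U s) = {Vlo s..Vhi s} \<and> Dom (U' s) = {Vlo s..Vhi s}
       \<and> Dom (Ut q) = {Vlo s..Vhi s} \<and> Dom (learned_target t Ut q) = {Vlo s..Vhi s}"
proof -
  have "regular_EPF s (U s)"
    using assms subtree_wf regular_EPF_U by blast
  moreover have "U' s = U s"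
    by (cases s) auto
  moreover have "regular_EPF s (Ut q)"
    using assms(2,3) by (rule regular_EPF_learned)
  moreover have "regular_EPF s (learned_target t Ut q)"
    using assms by (rule regular_EPF_learned_target)
  ultimately show ?thesis
    unfolding regular_EPF_def by simp
qed

end
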